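(* Let $p_1,\dots,p_s$ be distinct primes, $m_1,\dots,m_s\ge1$, and let $\Gamma$ be a multi-sorted constraint language over $\mathcal D=\{\mathbb Z_{p_1^{m_1}},\dots,\mathbb Z_{p_s^{m_s}}\}$ invariant with respect to the affine operation of $\mathbb Z_{p_1^{m_1}},\dots,\mathbb Z_{p_s^{m_s}}$. Let $\mathcal P$ be an instance of $\textsc{MCSP}(\Gamma)$. Then $\mathcal P$ is equivalent (has the same set of solutions) to an instance $\mathcal P'$ such that for every constraint $\langle\mathbf s,R\rangle$ of $\mathcal P'$ all variables in $\mathbf s$ are of the same sort. Moreover, $\mathcal P'$ has the same set of variables $X$ as $\mathcal P$, and every $x\in X$ has the same sort in $\mathcal P$ and $\mathcal P'$.
   Context: A multi-sorted relation with signature $(t_1,\dots,t_n)$ is a subset of $D_{t_1}\times\dots\times D_{t_n}$. An instance of $\textsc{MCSP}(\Gamma)$ is $(X,\mathcal D,\delta,\mathcal C)$ with $\delta$ assigning each variable a sort (domain) and constraints $\langle(x_1,\dots,x_m),R\rangle$ with $R\in\Gamma$ of signature $(\delta(x_1),\dots,\delta(x_m))$; solutions are assignments $\varphi(x)\in D_{\delta(x)}$ satisfying all constraints. Invariance under the affine operation: for all $\mathbf a,\mathbf b,\mathbf c\in R$, the coordinatewise $\mathbf a-\mathbf b+\mathbf c$ (in the respective groups) is in $R$. *)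

theory Defs
  imports "HOL-Computational_Algebra.Primes"
begin

text \<open>Sorts are indices i < s; the domain of sort i is Z_(q i), represented as
  the integers {0..<q i} with arithmetic modulo q i, where q i = p i ^ m i.
  A multi-sorted relation is a pair (signature, set of tuples), tuples being int lists.\<close>

type_synonym mrel = "nat list \<times> int list set"

definition dom_of :: "(nat \<Rightarrow> nat) \<Rightarrow> nat \<Rightarrow> int set" where
  "dom_of q i = {0..< int (q i)}"

definition is_mrel :: "nat \<Rightarrow> (nat \<Rightarrow> nat) \<Rightarrow> mrel \<Rightarrow> bool" where
  "is_mrel s q r \<longleftrightarrow> set (fst r) \<subseteq> {..<s} \<and>
     (\<forall>t \<in> snd r. length t = length (fst r) \<and>
        (\<forall>j < length t. t ! j \<in> dom_of q (fst r ! j)))"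

definition affine_invariant :: "(nat \<Rightarrow> nat) \<Rightarrow> mrel \<Rightarrow> bool" where
  "affine_invariant q r \<longleftrightarrow>
     (\<forall>a \<in> snd r. \<forall>b \<in> snd r. \<forall>c \<in> snd r.
        map (\<lambda>j. (a ! j - b ! j + c ! j) mod int (q (fst r ! j))) [0..<length (fst r)] \<in> snd r)"

type_synonym 'v constr = "'v list \<times> mrel"

definition wf_constr :: "'v set \<Rightarrow> ('v \<Rightarrow> nat) \<Rightarrow> 'v constr \<Rightarrow> bool" where
  "wf_constr X \<delta> c \<longleftrightarrow> set (fst c) \<subseteq> X \<and> map \<delta> (fst c) = fst (snd c)"

definition mcsp_instance :: "nat \<Rightarrow> (nat \<Rightarrow> nat) \<Rightarrow> mrel set \<Rightarrow> 'v set \<Rightarrow> ('v \<Rightarrow> nat)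
    \<Rightarrow> 'v constr set \<Rightarrow> bool" where
  "mcsp_instance s q \<Gamma> X \<delta> C \<longleftrightarrow> finite X \<and> finite C \<and> \<delta> ` X \<subseteq> {..<s} \<and>
     (\<forall>c \<in> C. wf_constr X \<delta> c \<and> snd c \<in> \<Gamma>)"

definition is_solution :: "(nat \<Rightarrow> nat) \<Rightarrow> 'v set \<Rightarrow> ('v \<Rightarrow> nat) \<Rightarrow> 'v constr set
    \<Rightarrow> ('v \<Rightarrow> int) \<Rightarrow> bool" where
  "is_solution q X \<delta> C \<phi> \<longleftrightarrow> (\<forall>x \<in> X. \<phi> x \<in> dom_of q (\<delta> x)) \<and>
     (\<forall>c \<in> C. map \<phi> (fst c) \<in> snd (snd c))"

end

theory Submission
  imports Defs "HOL-Number_Theory.Cong"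
begin

(* The moduli q i = p i ^ m i are pairwise coprime, so by the Chinese remainder theorem
   there is e with e = 1 mod q k and e = 0 mod q i for i ~= k.  Iterating the affine
   operation puts b + e (a - b) into R for all a, b in R, and this tuple agrees with a on
   the coordinates of sort k and with b elsewhere.  Hence a nonempty affine-invariant
   relation is the product of its projections onto the single sorts, and each constraint
   can be replaced by these projections. *)

lemma pairwise_coprime_idempotent:
  fixes q :: "'a \<Rightarrow> nat"
  assumes "finite I" "k \<in> I" "pairwise (\<lambda>i j. coprime (q i) (q j)) I"
  shows "\<exists>e. \<forall>i\<in>I. [e = (if i = k then 1 else 0)] (mod q i)"
proof -
  define M where "M = (\<Prod>i\<in>I - {k}. q i)"
  have "coprime M (q k)"
    unfolding M_def using assms(2,3) by (intro prod_coprime_left) (auto simp: pairwise_def)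
  then obtain x where x: "[M * x = 1] (mod q k)"
    using cong_solve_coprime_nat by auto
  have "q i dvd M * x" if "i \<in> I" "i \<noteq> k" for i
    unfolding M_def using assms(1) that by (intro dvd_mult2 dvd_prodI) auto
  with x show ?thesis
    by (intro exI[of _ "M * x"]) (auto simp: cong_0_iff)
qed

lemma affine_invariant_line_mem:
  assumes rel: "is_mrel s q (sig, T)" and aff: "affine_invariant q (sig, T)"
    and a: "a \<in> T" and b: "b \<in> T"
  shows "map (\<lambda>j. (b ! j + int n * (a ! j - b ! j)) mod int (q (sig ! j))) [0..<length sig] \<in> T"
proof (induction n)
  case 0
  have "map (\<lambda>j. (b ! j + int 0 * (a ! j - b ! j)) mod int (q (sig ! j))) [0..<length sig] = b"
    using rel b by (intro nth_equalityI) (auto simp: is_mrel_def dom_of_def)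
  with b show ?case by simp
next
  case (Suc n)
  let ?line = "\<lambda>n. map (\<lambda>j. (b ! j + int n * (a ! j - b ! j)) mod int (q (sig ! j))) [0..<length sig]"
  have "?line (Suc n) = map (\<lambda>j. (?line n ! j - b ! j + a ! j) mod int (q (sig ! j))) [0..<length sig]"
  proof (rule nth_equalityI)
    fix j assume "j < length (?line (Suc n))"
    then have "j < length sig" by simp
    moreover have "(x + int (Suc n) * (y - x)) mod r = ((x + int n * (y - x)) mod r - x + y) mod r"
      for x y r :: int
    proof -
      have "(x + int (Suc n) * (y - x)) mod r = ((x + int n * (y - x)) + (y - x)) mod r"
        by (simp add: algebra_simps)
      also have "\<dots> = ((x + int n * (y - x)) mod r + (y - x)) mod r"
        by (simp add: mod_add_left_eq)
      also have "\<dots> = ((x + int n * (y - x)) mod r - x + y) mod r"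
        by (simp add: algebra_simps)
      finally show ?thesis .
    qed
    ultimately show "?line (Suc n) ! j
        = map (\<lambda>j. (?line n ! j - b ! j + a ! j) mod int (q (sig ! j))) [0..<length sig] ! j"
      by simp
  qed simp
  also have "\<dots> \<in> T"
    using aff Suc a b unfolding affine_invariant_def by auto
  finally show ?case .
qed

lemma affine_invariant_splice_sort:
  assumes rel: "is_mrel s q (sig, T)" and aff: "affine_invariant q (sig, T)"
    and a: "a \<in> T" and b: "b \<in> T"
    and e: "\<forall>i\<in>set sig. [int e = (if i = k then 1 else 0)] (mod int (q i))"
  shows "map (\<lambda>j. if sig ! j = k then a ! j else b ! j) [0..<length sig] \<in> T"
proof -
  have "map (\<lambda>j. if sig ! j = k then a ! j else b ! j) [0..<length sig]
      = map (\<lambda>j. (b ! j + int e * (a ! j - b ! j)) mod int (q (sig ! j))) [0..<length sig]"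
  proof (rule nth_equalityI)
    fix j assume "j < length (map (\<lambda>j. if sig ! j = k then a ! j else b ! j) [0..<length sig])"
    then have j: "j < length sig" by simp
    have "[b ! j + int e * (a ! j - b ! j) = b ! j + (if sig ! j = k then 1 else 0) * (a ! j - b ! j)]
        (mod int (q (sig ! j)))"
      using e j by (intro cong_add cong_mult) auto
    moreover have "a ! j \<in> dom_of q (sig ! j)" "b ! j \<in> dom_of q (sig ! j)"
      using rel a b j by (auto simp: is_mrel_def)
    ultimately show "map (\<lambda>j. if sig ! j = k then a ! j else b ! j) [0..<length sig] ! j
        = map (\<lambda>j. (b ! j + int e * (a ! j - b ! j)) mod int (q (sig ! j))) [0..<length sig] ! j"
      using j by (auto simp: cong_def dom_of_def)
  qed simp
  also have "\<dots> \<in> T"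
    by (rule affine_invariant_line_mem[OF rel aff a b])
  finally show ?thesis .
qed

lemma affine_invariant_mem_if_sortwise_mem:
  assumes rel: "is_mrel s q (sig, T)" and aff: "affine_invariant q (sig, T)"
    and coprime: "pairwise (\<lambda>i j. coprime (q i) (q j)) {..<s}"
    and nonempty: "T \<noteq> {}" and len: "length t = length sig"
    and sortwise: "\<forall>i<s. \<exists>a\<in>T. \<forall>j<length sig. sig ! j = i \<longrightarrow> a ! j = t ! j"
  shows "t \<in> T"
proof -
  obtain a0 where a0: "a0 \<in> T" using nonempty by blast
  define w where "w k = map (\<lambda>j. if sig ! j < k then t ! j else a0 ! j) [0..<length sig]" for k
  have "w k \<in> T" if "k \<le> s" for k
    using that
  proof (induction k)
    case 0
    have "w 0 = a0" using rel a0 unfolding w_def is_mrel_def by (intro nth_equalityI) auto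
    with a0 show ?case by simp
  next
    case (Suc k)
    then have k: "k < s" and wk: "w k \<in> T" by auto
    obtain a where a: "a \<in> T" and agree: "\<forall>j<length sig. sig ! j = k \<longrightarrow> a ! j = t ! j"
      using sortwise k by blast
    obtain e where e: "\<forall>i\<in>{..<s}. [e = (if i = k then 1 else 0)] (mod q i)"
      using pairwise_coprime_idempotent[OF _ _ coprime, of k] k by auto
    have e_int: "\<forall>i\<in>set sig. [int e = (if i = k then 1 else 0)] (mod int (q i))"
      using rel unfolding is_mrel_def by (auto dest!: bspec[OF e] simp flip: cong_int_iff split: if_splits)
    have "w (Suc k) = map (\<lambda>j. if sig ! j = k then a ! j else w k ! j) [0..<length sig]"
      unfolding w_def using agree by (intro nth_equalityI) auto
    also have "\<dots> \<in> T"
      by (rule affine_invariant_splice_sort[OF rel aff a wk e_int])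
    finally show ?case .
  qed
  moreover have "w s = t"
    unfolding w_def using rel len by (intro nth_equalityI) (auto simp: is_mrel_def subset_iff)
  ultimately show ?thesis by auto
qed

definition sort_positions :: "nat list \<Rightarrow> nat \<Rightarrow> nat list" where
  "sort_positions sig i = filter (\<lambda>j. sig ! j = i) [0..<length sig]"

lemma set_sort_positions: "set (sort_positions sig i) = {j. j < length sig \<and> sig ! j = i}"
  by (auto simp: sort_positions_def)

definition restrict_to_sort :: "'v constr \<Rightarrow> nat \<Rightarrow> 'v constr" where
  "restrict_to_sort c i = (let J = sort_positions (fst (snd c)) i in
     (map ((!) (fst c)) J, map ((!) (fst (snd c))) J, (\<lambda>t. map ((!) t) J) ` snd (snd c)))"

abbreviation satisfies :: "('v \<Rightarrow> int) \<Rightarrow> 'v constr \<Rightarrow> bool" where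
  "satisfies \<phi> c \<equiv> map \<phi> (fst c) \<in> snd (snd c)"

lemma wf_constr_restrict_to_sort:
  assumes "wf_constr X \<delta> c"
  shows "wf_constr X \<delta> (restrict_to_sort c i)"
    and "\<forall>x\<in>set (fst (restrict_to_sort c i)). \<delta> x = i"
proof -
  obtain xs sig T where c: "c = (xs, sig, T)" by (cases c)
  have "set xs \<subseteq> X" and "map \<delta> xs = sig"
    using assms by (auto simp: c wf_constr_def)
  then have "length xs = length sig" "\<And>j. j < length sig \<Longrightarrow> \<delta> (xs ! j) = sig ! j"
    by auto
  with \<open>set xs \<subseteq> X\<close> show "wf_constr X \<delta> (restrict_to_sort c i)"
    and "\<forall>x\<in>set (fst (restrict_to_sort c i)). \<delta> x = i"
    by (auto simp: c wf_constr_def restrict_to_sort_def Let_def set_sort_positions)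
qed

lemma is_mrel_restrict_to_sort:
  assumes "is_mrel s q (snd c)"
  shows "is_mrel s q (snd (restrict_to_sort c i))"
  using assms nth_mem[of _ "sort_positions (fst (snd c)) i"]
  by (fastforce simp: is_mrel_def restrict_to_sort_def Let_def set_sort_positions subset_iff)

lemma satisfies_iff_restrictions:
  assumes wf: "wf_constr X \<delta> c"
    and rel: "is_mrel s q (snd c)" and aff: "affine_invariant q (snd c)"
    and coprime: "pairwise (\<lambda>i j. coprime (q i) (q j)) {..<s}"
  shows "satisfies \<phi> c \<longleftrightarrow> (\<forall>i\<le>s. satisfies \<phi> (restrict_to_sort c i))"
proof -
  obtain xs sig T where c: "c = (xs, sig, T)" by (cases c)
  have len: "length xs = length sig"
    using wf by (auto simp: c wf_constr_def)
  have proj: "map \<phi> (map ((!) xs) (sort_positions sig i))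
      = map ((!) (map \<phi> xs)) (sort_positions sig i)" for i
    using len by (auto simp: set_sort_positions)
  have restriction: "satisfies \<phi> (restrict_to_sort c i) \<longleftrightarrow>
      map ((!) (map \<phi> xs)) (sort_positions sig i) \<in> (\<lambda>t. map ((!) t) (sort_positions sig i)) ` T"
    for i
    by (simp only: c restrict_to_sort_def Let_def fst_conv snd_conv proj)
  show ?thesis
  proof
    assume "satisfies \<phi> c"
    then have "map \<phi> xs \<in> T" by (simp add: c)
    then show "\<forall>i\<le>s. satisfies \<phi> (restrict_to_sort c i)"
      unfolding restriction by blast
  next
    assume restrictions: "\<forall>i\<le>s. satisfies \<phi> (restrict_to_sort c i)"
    have "sig ! j < s" if "j < length sig" for j
      using rel nth_mem[OF that] by (auto simp: c is_mrel_def)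
    then have "sort_positions sig s = []"
      unfolding sort_positions_def filter_empty_conv by fastforce
    then have "T \<noteq> {}"
      using restrictions restriction[of s] by auto
    moreover have "\<exists>a\<in>T. \<forall>j<length sig. sig ! j = i \<longrightarrow> a ! j = map \<phi> xs ! j" if "i < s" for i
    proof -
      obtain a where "a \<in> T"
        and "map ((!) (map \<phi> xs)) (sort_positions sig i) = map ((!) a) (sort_positions sig i)"
        using restrictions restriction[of i] \<open>i < s\<close> by auto
      then show ?thesis
        by (auto simp: set_sort_positions)
    qed
    ultimately show "satisfies \<phi> c"
      using affine_invariant_mem_if_sortwise_mem[of s q sig T] rel aff coprime len by (auto simp: c)
  qed
qed

(* Sort s occurs in no signature: the restriction to it is the constraint with empty scope
   that records whether the relation is nonempty, which matters when s = 0. *)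
definition restrict_to_sorts :: "nat \<Rightarrow> 'v constr set \<Rightarrow> 'v constr set" where
  "restrict_to_sorts s C = (\<Union>c\<in>C. restrict_to_sort c ` {..s})"

lemma finite_restrict_to_sorts: "finite C \<Longrightarrow> finite (restrict_to_sorts s C)"
  by (simp add: restrict_to_sorts_def)

lemma restrict_to_sorts_single_sorted:
  assumes "\<forall>c\<in>C. wf_constr X \<delta> c \<and> is_mrel s q (snd c)" and "c' \<in> restrict_to_sorts s C"
  shows "wf_constr X \<delta> c' \<and> is_mrel s q (snd c') \<and> (\<forall>x\<in>set (fst c'). \<forall>y\<in>set (fst c'). \<delta> x = \<delta> y)"
proof -
  obtain c i where "c \<in> C" and c': "c' = restrict_to_sort c i"
    using assms(2) unfolding restrict_to_sorts_def by blast
  with assms(1) have "wf_constr X \<delta> c" "is_mrel s q (snd c)"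
    by blast+
  with wf_constr_restrict_to_sort[of X \<delta> c i] is_mrel_restrict_to_sort[of s q c i]
  show ?thesis
    unfolding c' by auto
qed

lemma is_solution_restrict_to_sorts:
  assumes "\<forall>c\<in>C. wf_constr X \<delta> c \<and> is_mrel s q (snd c) \<and> affine_invariant q (snd c)"
    and coprime: "pairwise (\<lambda>i j. coprime (q i) (q j)) {..<s}"
  shows "is_solution q X \<delta> (restrict_to_sorts s C) \<phi> \<longleftrightarrow> is_solution q X \<delta> C \<phi>"
proof -
  have "satisfies \<phi> c \<longleftrightarrow> (\<forall>i\<le>s. satisfies \<phi> (restrict_to_sort c i))" if "c \<in> C" for c
  proof (rule satisfies_iff_restrictions[OF _ _ _ coprime])
    show "wf_constr X \<delta> c" "is_mrel s q (snd c)" "affine_invariant q (snd c)"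
      using assms(1) that by blast+
  qed
  then show ?thesis
    unfolding is_solution_def restrict_to_sorts_def by blast
qed

theorem proposition4p5:
  fixes s :: nat and p m :: "nat \<Rightarrow> nat" and \<Gamma> :: "mrel set"
    and X :: "'v set" and \<delta> :: "'v \<Rightarrow> nat" and C :: "'v constr set"
  assumes primes: "\<forall>i < s. prime (p i)"
    and distinct: "\<forall>i < s. \<forall>j < s. i \<noteq> j \<longrightarrow> p i \<noteq> p j"
    and exps: "\<forall>i < s. m i \<ge> 1"
    and lang: "\<forall>r \<in> \<Gamma>. is_mrel s (\<lambda>i. p i ^ m i) r"
    and affine: "\<forall>r \<in> \<Gamma>. affine_invariant (\<lambda>i. p i ^ m i) r"
    and inst: "mcsp_instance s (\<lambda>i. p i ^ m i) \<Gamma> X \<delta> C"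
  shows "\<exists>C' :: 'v constr set. finite C' \<and>
           (\<forall>c \<in> C'. wf_constr X \<delta> c \<and> is_mrel s (\<lambda>i. p i ^ m i) (snd c) \<and>
              (\<forall>x \<in> set (fst c). \<forall>y \<in> set (fst c). \<delta> x = \<delta> y)) \<and>
           (\<forall>\<phi>. is_solution (\<lambda>i. p i ^ m i) X \<delta> C' \<phi> \<longleftrightarrow>
                 is_solution (\<lambda>i. p i ^ m i) X \<delta> C \<phi>)"
  
proof -
  let ?q = "\<lambda>i. p i ^ m i"
  have coprime: "pairwise (\<lambda>i j. coprime (?q i) (?q j)) {..<s}"
    using primes distinct by (auto simp: pairwise_def primes_coprime)
  have "finite C" and C: "\<forall>c\<in>C. wf_constr X \<delta> c \<and> snd c \<in> \<Gamma>"
    using inst by (auto simp: mcsp_instance_def)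
  then have constraints: "\<forall>c\<in>C. wf_constr X \<delta> c \<and> is_mrel s ?q (snd c) \<and> affine_invariant ?q (snd c)"
    using lang affine by blast
  show ?thesis
  proof (intro exI conjI)
    show "finite (restrict_to_sorts s C)"
      using \<open>finite C\<close> by (rule finite_restrict_to_sorts)
    show "\<forall>c'\<in>restrict_to_sorts s C. wf_constr X \<delta> c' \<and> is_mrel s ?q (snd c') \<and>
        (\<forall>x\<in>set (fst c'). \<forall>y\<in>set (fst c'). \<delta> x = \<delta> y)"
      using constraints restrict_to_sorts_single_sorted[of C X \<delta> s ?q] by blast
    show "\<forall>\<phi>. is_solution ?q X \<delta> (restrict_to_sorts s C) \<phi> \<longleftrightarrow> is_solution ?q X \<delta> C \<phi>"
      using is_solution_restrict_to_sorts[OF constraints coprime] by blast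
  qed
qed

end
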